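(* Let $\mathcal H$ be a multiplicative representation. Complex conjugation $\alpha\mapsto\bar\alpha$ on $\mathcal H^{\mathrm{fin}}$ extends by continuity to an antilinear involution $v\mapsto\bar v$ on $\mathcal H$, satisfying $\langle\bar v,\bar w\rangle_{\mathcal H}=\overline{\langle v,w\rangle_{\mathcal H}}$, and in particular $\|\bar v\|_{\mathcal H}=\|v\|_{\mathcal H}$, for all $v,w\in\mathcal H$.
   Context: $G=\mathrm{PSL}_2(\mathbf R)$, $K=\mathrm{PSO}_2(\mathbf R)$, $\mathfrak g=\mathfrak{sl}_2(\mathbf C)$. A multiplicative representation is a unitary $G$-representation $\mathcal H$ (inner product linear in the first argument) with discrete spectrum (Hilbert sum of irreducibles, finitely many with Casimir eigenvalue in any bounded set), with $\mathcal H^{\rm fin}$ the algebraic sum of $K$-finite vectors of the summands, together with a bilinear map $\mathcal H^{\rm fin}\times\mathcal H^{\rm fin}\to\mathcal H^\infty$ (smooth vectors) that is commutative, has a unit $\mathbf 1$ of norm $1$ with $\mathcal H^G=\mathbf C\mathbf 1$, obeys $X(\alpha\beta)=(X\alpha)\beta+\alpha(X\beta)$ for $X\in\mathfrak g$, and satisfies crossing symmetry $\langle\alpha_1\alpha_2,\bar\alpha_3\bar\alpha_4\rangle=\langle\alpha_{\sigma(1)}\alpha_{\sigma(2)},\bar\alpha_{\sigma(3)}\bar\alpha_{\sigma(4)}\rangle$ for $\sigma\in S_4$, where for each $\alpha\in\mathcal H^{\rm fin}$ the complex conjugate $\bar\alpha$ is the (assumed to exist, necessarily unique) element of $\mathcal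 H^{\rm fin}$ with $\langle\alpha\beta,\gamma\rangle=\langle\beta,\bar\alpha\gamma\rangle$ for all $\beta,\gamma\in\mathcal H^{\rm fin}$. *)

theory Defs
  imports "HOL-Analysis.Analysis"
begin

text \<open>The Hilbert space H is a type 'h of class real_normed_vector + complete_space,
  together with J (multiplication by the imaginary unit) and a complex-valued inner
  product ip, linear in the FIRST argument, whose norm is the norm of 'h.\<close>

definition cscale :: "('h::real_vector \<Rightarrow> 'h) \<Rightarrow> complex \<Rightarrow> 'h \<Rightarrow> 'h" where
  "cscale J z v = Re z *\<^sub>R v + Im z *\<^sub>R J v"

definition complex_hilbert :: "('h::{real_normed_vector,complete_space} \<Rightarrow> 'h) \<Rightarrow> ('h \<Rightarrow> 'h \<Rightarrow> complex) \<Rightarrow> bool" where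
  "complex_hilbert J ip \<longleftrightarrow>
     linear J \<and> (\<forall>v. J (J v) = - v) \<and>
     (\<forall>u v w. ip (u + v) w = ip u w + ip v w) \<and>
     (\<forall>r v w. ip (r *\<^sub>R v) w = complex_of_real r * ip v w) \<and>
     (\<forall>v w. ip (J v) w = \<i> * ip v w) \<and>
     (\<forall>v w. ip w v = cnj (ip v w)) \<and>
     (\<forall>v. ip v v = complex_of_real ((norm v)\<^sup>2))"

definition clinear_map :: "('h::real_vector \<Rightarrow> 'h) \<Rightarrow> ('h \<Rightarrow> 'h) \<Rightarrow> bool" where
  "clinear_map J T \<longleftrightarrow> linear T \<and> (\<forall>v. T (J v) = J (T v))"

definition csubspace :: "('h::real_vector \<Rightarrow> 'h) \<Rightarrow> 'h set \<Rightarrow> bool" where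
  "csubspace J W \<longleftrightarrow> subspace W \<and> J ` W \<subseteq> W"

section \<open>The group G = PSL_2(R), realised as SL_2(R) acting trivially through -1\<close>

definition SL2 :: "(real^2^2) set" where
  "SL2 = {g. det g = 1}"

definition mat2 :: "real \<Rightarrow> real \<Rightarrow> real \<Rightarrow> real \<Rightarrow> real^2^2" where
  "mat2 a b c d = vector [vector [a, b], vector [c, d]]"

text \<open>K = PSO_2(R): image of the rotations.\<close>
definition rot :: "real \<Rightarrow> real^2^2" where
  "rot \<theta> = mat2 (cos \<theta>) (- sin \<theta>) (sin \<theta>) (cos \<theta>)"

text \<open>One-parameter subgroups exp(tH), exp(tE), exp(tF) for the standard basis
  H = diag(1,-1), E = e_12, F = e_21 of sl_2(R).\<close>
definition expH :: "real \<Rightarrow> real^2^2" where "expH t = mat2 (exp t) 0 0 (exp (- t))"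
definition expE :: "real \<Rightarrow> real^2^2" where "expE t = mat2 1 t 0 1"
definition expF :: "real \<Rightarrow> real^2^2" where "expF t = mat2 1 0 t 1"

text \<open>Iwasawa parametrisation (x,y,theta) |-> n(x) a(y) k(theta), y > 0; a surjective
  local diffeomorphism R x R_{>0} x R -> SL_2(R), used to define smoothness on G.\<close>
definition iwasawa :: "real^3 \<Rightarrow> real^2^2" where
  "iwasawa p = mat2 1 (p$1) 0 1 ** mat2 (sqrt (p$2)) 0 0 (1 / sqrt (p$2)) ** rot (p$3)"

definition iwasawa_domain :: "(real^3) set" where
  "iwasawa_domain = {p. p$2 > 0}"

definition unitary_rep ::
  "('h::{real_normed_vector,complete_space} \<Rightarrow> 'h) \<Rightarrow> ('h \<Rightarrow> 'h \<Rightarrow> complex) \<Rightarrow> (real^2^2 \<Rightarrow> 'h \<Rightarrow> 'h) \<Rightarrow> bool" where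
  "unitary_rep J ip \<pi> \<longleftrightarrow>
     (\<forall>g\<in>SL2. clinear_map J (\<pi> g) \<and> (\<forall>v w. ip (\<pi> g v) (\<pi> g w) = ip v w)) \<and>
     \<pi> (mat 1) = id \<and> \<pi> (- mat 1) = id \<and>
     (\<forall>g\<in>SL2. \<forall>h\<in>SL2. \<pi> (g ** h) = \<pi> g \<circ> \<pi> h) \<and>
     (\<forall>v. continuous_on SL2 (\<lambda>g. \<pi> g v))"

fun iter_pd :: "3 list \<Rightarrow> (real^3 \<Rightarrow> 'b::real_normed_vector) \<Rightarrow> real^3 \<Rightarrow> 'b" where
  "iter_pd [] f = f"
| "iter_pd (i # is) f = (\<lambda>x. vector_derivative (\<lambda>t. iter_pd is f (x + t *\<^sub>R axis i 1)) (at 0))"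

definition smooth_on :: "(real^3) set \<Rightarrow> (real^3 \<Rightarrow> 'b::real_normed_vector) \<Rightarrow> bool" where
  "smooth_on S f \<longleftrightarrow>
     (\<forall>is. continuous_on S (iter_pd is f) \<and>
       (\<forall>i. \<forall>x\<in>S. ((\<lambda>t. iter_pd is f (x + t *\<^sub>R axis i 1)) has_vector_derivative iter_pd (i # is) f x) (at 0)))"

definition smooth_vector :: "(real^2^2 \<Rightarrow> 'h \<Rightarrow> 'h::real_normed_vector) \<Rightarrow> 'h \<Rightarrow> bool" where
  "smooth_vector \<pi> v \<longleftrightarrow> smooth_on iwasawa_domain (\<lambda>p. \<pi> (iwasawa p) v)"

definition dact :: "(real^2^2 \<Rightarrow> 'h \<Rightarrow> 'h::real_normed_vector) \<Rightarrow> (real \<Rightarrow> real^2^2) \<Rightarrow> 'h \<Rightarrow> 'h" where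
  "dact \<pi> c v = vector_derivative (\<lambda>t. \<pi> (c t) v) (at 0)"

text \<open>g = sl_2(C) = trace-zero complex 2x2 matrices; X = X11 H + X12 E + X21 F,
  acting by the complex-linear extension of the derived representation.\<close>
definition sl2C :: "(complex^2^2) set" where
  "sl2C = {X. X$1$1 + X$2$2 = 0}"

definition lie_act :: "('h \<Rightarrow> 'h) \<Rightarrow> (real^2^2 \<Rightarrow> 'h \<Rightarrow> 'h::real_normed_vector) \<Rightarrow> complex^2^2 \<Rightarrow> 'h \<Rightarrow> 'h" where
  "lie_act J \<pi> X v = cscale J (X$1$1) (dact \<pi> expH v) + cscale J (X$1$2) (dact \<pi> expE v)
                     + cscale J (X$2$1) (dact \<pi> expF v)"

text \<open>Casimir element Omega = H^2 + 2EF + 2FE (any normalisation gives the same finiteness condition).\<close>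
definition casimir :: "(real^2^2 \<Rightarrow> 'h \<Rightarrow> 'h::real_normed_vector) \<Rightarrow> 'h \<Rightarrow> 'h" where
  "casimir \<pi> v = dact \<pi> expH (dact \<pi> expH v)
                 + 2 *\<^sub>R dact \<pi> expE (dact \<pi> expF v) + 2 *\<^sub>R dact \<pi> expF (dact \<pi> expE v)"

definition K_finite :: "('h \<Rightarrow> 'h) \<Rightarrow> (real^2^2 \<Rightarrow> 'h \<Rightarrow> 'h::real_vector) \<Rightarrow> 'h \<Rightarrow> bool" where
  "K_finite J \<pi> v \<longleftrightarrow> (\<exists>B. finite B \<and> (\<forall>\<theta>. \<pi> (rot \<theta>) v \<in> span (B \<union> J ` B)))"

definition G_invariant :: "(real^2^2 \<Rightarrow> 'h \<Rightarrow> 'h) \<Rightarrow> 'h set \<Rightarrow> bool" where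
  "G_invariant \<pi> W \<longleftrightarrow> (\<forall>g\<in>SL2. \<pi> g ` W \<subseteq> W)"

definition irreducible_sub ::
  "('h \<Rightarrow> 'h) \<Rightarrow> (real^2^2 \<Rightarrow> 'h \<Rightarrow> 'h::real_normed_vector) \<Rightarrow> 'h set \<Rightarrow> bool" where
  "irreducible_sub J \<pi> V \<longleftrightarrow>
     csubspace J V \<and> closed V \<and> G_invariant \<pi> V \<and> V \<noteq> {0} \<and>
     (\<forall>W. csubspace J W \<and> closed W \<and> G_invariant \<pi> W \<and> W \<subseteq> V \<longrightarrow> W = {0} \<or> W = V)"

definition discrete_spectrum_with_fin ::
  "('h::{real_normed_vector,complete_space} \<Rightarrow> 'h) \<Rightarrow> ('h \<Rightarrow> 'h \<Rightarrow> complex) \<Rightarrow> (real^2^2 \<Rightarrow> 'h \<Rightarrow> 'h) \<Rightarrow> 'h set \<Rightarrow> bool" where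
  "discrete_spectrum_with_fin J ip \<pi> Hfin \<longleftrightarrow>
     (\<exists>(I :: 'h set set) (ev :: 'h set \<Rightarrow> complex).
        (\<forall>V\<in>I. irreducible_sub J \<pi> V) \<and>
        (\<forall>V\<in>I. \<forall>W\<in>I. V \<noteq> W \<longrightarrow> (\<forall>v\<in>V. \<forall>w\<in>W. ip v w = 0)) \<and>
        closure (span (\<Union>I)) = UNIV \<and>
        (\<forall>V\<in>I. \<forall>v\<in>V. smooth_vector \<pi> v \<longrightarrow> casimir \<pi> v = cscale J (ev V) v) \<and>
        (\<forall>B::real. finite {V\<in>I. cmod (ev V) \<le> B}) \<and>
        Hfin = span (\<Union>V\<in>I. {v \<in> V. K_finite J \<pi> v}))"

definition is_conj_of :: "('h \<Rightarrow> 'h \<Rightarrow> complex) \<Rightarrow> 'h set \<Rightarrow> ('h \<Rightarrow> 'h \<Rightarrow> 'h) \<Rightarrow> 'h \<Rightarrow> 'h \<Rightarrow> bool" where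
  "is_conj_of ip Hfin mul a b \<longleftrightarrow>
     b \<in> Hfin \<and> (\<forall>x\<in>Hfin. \<forall>y\<in>Hfin. ip (mul a x) y = ip x (mul b y))"

definition conj_of :: "('h \<Rightarrow> 'h \<Rightarrow> complex) \<Rightarrow> 'h set \<Rightarrow> ('h \<Rightarrow> 'h \<Rightarrow> 'h) \<Rightarrow> 'h \<Rightarrow> 'h" where
  "conj_of ip Hfin mul a = (THE b. is_conj_of ip Hfin mul a b)"

definition multiplicative_rep ::
  "('h::{real_normed_vector,complete_space} \<Rightarrow> 'h) \<Rightarrow> ('h \<Rightarrow> 'h \<Rightarrow> complex) \<Rightarrow> (real^2^2 \<Rightarrow> 'h \<Rightarrow> 'h)
    \<Rightarrow> 'h set \<Rightarrow> ('h \<Rightarrow> 'h \<Rightarrow> 'h) \<Rightarrow> 'h \<Rightarrow> bool" where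
  "multiplicative_rep J ip \<pi> Hfin mul one \<longleftrightarrow>
     complex_hilbert J ip \<and> unitary_rep J ip \<pi> \<and> discrete_spectrum_with_fin J ip \<pi> Hfin \<and>
     \<comment> \<open>bilinear map Hfin x Hfin -> smooth vectors\<close>
     (\<forall>a\<in>Hfin. \<forall>b\<in>Hfin. \<forall>c\<in>Hfin. mul (a + b) c = mul a c + mul b c \<and> mul a (b + c) = mul a b + mul a c) \<and>
     (\<forall>z. \<forall>a\<in>Hfin. \<forall>b\<in>Hfin. mul (cscale J z a) b = cscale J z (mul a b) \<and> mul a (cscale J z b) = cscale J z (mul a b)) \<and>
     (\<forall>a\<in>Hfin. \<forall>b\<in>Hfin. smooth_vector \<pi> (mul a b)) \<and>
     \<comment> \<open>commutative, with unit of norm 1 spanning the G-invariants\<close>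
     (\<forall>a\<in>Hfin. \<forall>b\<in>Hfin. mul a b = mul b a) \<and>
     one \<in> Hfin \<and> (\<forall>a\<in>Hfin. mul one a = a) \<and> norm one = 1 \<and>
     {v. \<forall>g\<in>SL2. \<pi> g v = v} = range (\<lambda>z. cscale J z one) \<and>
     \<comment> \<open>Leibniz rule for g = sl_2(C)\<close>
     (\<forall>X\<in>sl2C. \<forall>a\<in>Hfin. \<forall>b\<in>Hfin.
        lie_act J \<pi> X (mul a b) = mul (lie_act J \<pi> X a) b + mul a (lie_act J \<pi> X b)) \<and>
     \<comment> \<open>existence of complex conjugates\<close>
     (\<forall>a\<in>Hfin. \<exists>b. is_conj_of ip Hfin mul a b) \<and>
     \<comment> \<open>crossing symmetry\<close>
     (\<forall>(\<alpha>::nat \<Rightarrow> 'h) \<sigma>. (\<forall>k\<in>{1..4}. \<alpha> k \<in> Hfin) \<and> \<sigma> permutes {1..4} \<longrightarrow>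
        ip (mul (\<alpha> 1) (\<alpha> 2)) (mul (conj_of ip Hfin mul (\<alpha> 3)) (conj_of ip Hfin mul (\<alpha> 4)))
        = ip (mul (\<alpha> (\<sigma> 1)) (\<alpha> (\<sigma> 2)))
             (mul (conj_of ip Hfin mul (\<alpha> (\<sigma> 3))) (conj_of ip Hfin mul (\<alpha> (\<sigma> 4)))))"

end

theory Submission
  imports Defs
begin

text \<open>Write \<open>a*\<close> for the conjugate of \<open>a \<in> Hfin\<close>, characterised by \<open>\<langle>a x, y\<rangle> = \<langle>x, a* y\<rangle>\<close>.
  Conjugates are unique because of the unit, so Hermitian symmetry gives \<open>a** = a\<close>, and with
  commutativity
  \<open>\<langle>a*, b*\<rangle> = \<langle>a* 1, b*\<rangle> = \<langle>1, a b*\<rangle> = cnj \<langle>b* a, 1\<rangle> = cnj \<langle>a, b\<rangle>\<close>, so conjugation is an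
  antiunitary involution of Hfin, in particular an isometry. It therefore extends by continuity
  once Hfin is dense, and the identities pass to the limit; additivity and antilinearity come for
  free, since every map reversing the inner product has them.

  Density of Hfin reduces to density of the K-finite vectors in each irreducible summand V.
  For \<open>v \<in> V\<close> the averages \<open>\<integral> ((1 + cos t) / 2)^k \<pi>(rot t) v dt\<close> over K stay in the closed
  invariant subspace V, are K-finite because the kernel is a trigonometric polynomial of degree
  k, and, normalised, converge to v because the kernel concentrates at \<open>t = 0\<close>.\<close>

section \<open>Complex Hilbert spaces\<close>

locale complex_hilbert_space =
  fixes J :: "'h::{real_normed_vector,complete_space} \<Rightarrow> 'h" and ip :: "'h \<Rightarrow> 'h \<Rightarrow> complex"
  assumes complex_hilbert: "complex_hilbert J ip"
begin

lemma linear_J: "linear J"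
  and ip_add_left: "ip (u + v) w = ip u w + ip v w"
  and ip_scaleR_left: "ip (r *\<^sub>R v) w = complex_of_real r * ip v w"
  and ip_J_left: "ip (J v) w = \<i> * ip v w"
  and ip_commute: "ip w v = cnj (ip v w)"
  and ip_self: "ip v v = complex_of_real ((norm v)\<^sup>2)"
  using complex_hilbert unfolding complex_hilbert_def by blast+

lemma ip_add_right: "ip w (u + v) = ip w u + ip w v"
  using ip_commute[of w "u + v"] ip_commute[of w u] ip_commute[of w v] ip_add_left[of u v w] by simp

lemma ip_J_right: "ip w (J v) = - \<i> * ip w v"
  using ip_commute[of w "J v"] ip_commute[of w v] ip_J_left[of v w] by simp

lemma ip_minus_left: "ip (- v) w = - ip v w"
  using ip_scaleR_left[of "- 1" v w] by simp

lemma ip_minus_right: "ip w (- v) = - ip w v"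
  using ip_commute[of w "- v"] ip_commute[of w v] ip_minus_left[of v w] by simp

lemma ip_diff_left: "ip (u - v) w = ip u w - ip v w"
  using ip_add_left[of u "- v" w] ip_minus_left by simp

lemma ip_diff_right: "ip w (u - v) = ip w u - ip w v"
  using ip_add_right[of w u "- v"] ip_minus_right by simp

lemma ip_cscale_left: "ip (cscale J z v) w = z * ip v w"
  unfolding cscale_def ip_add_left ip_scaleR_left ip_J_left
  by (simp add: complex_eq_iff algebra_simps)

lemma ip_cscale_right: "ip w (cscale J z v) = cnj z * ip w v"
  using ip_commute[of w "cscale J z v"] ip_commute[of w v] ip_cscale_left[of z v w] by simp

lemma ip_self_eq_0_iff: "ip v v = 0 \<longleftrightarrow> v = 0"
  by (simp add: ip_self)

lemma norm_eq_if_ip_self_eq: "ip u u = ip v v \<Longrightarrow> norm u = norm v"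
  unfolding ip_self of_real_eq_iff using power2_eq_iff_nonneg norm_ge_zero by blast

lemma bounded_linear_J: "bounded_linear J"
proof -
  have "norm (J v) = norm v" for v
    by (rule norm_eq_if_ip_self_eq) (simp add: ip_J_left ip_J_right)
  then show ?thesis
    using linear_J by (intro bounded_linear_intro[where K = 1]) (auto simp: linear_add linear_scale)
qed

lemma Re_ip_polarization: "Re (ip x y) = ((norm (x + y))\<^sup>2 - (norm (x - y))\<^sup>2) / 4"
proof -
  have "Re (ip (x + y) (x + y)) = Re (ip x x) + Re (ip y y) + 2 * Re (ip x y)"
    and "Re (ip (x - y) (x - y)) = Re (ip x x) + Re (ip y y) - 2 * Re (ip x y)"
    using ip_commute[of y x] by (simp_all add: ip_add_left ip_add_right ip_diff_left ip_diff_right)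
  then show ?thesis by (simp add: ip_self)
qed

lemma ip_polarization: "ip x y = complex_of_real (((norm (x + y))\<^sup>2 - (norm (x - y))\<^sup>2) / 4)
   + \<i> * complex_of_real (((norm (x + J y))\<^sup>2 - (norm (x - J y))\<^sup>2) / 4)"
proof -
  have "Im (ip x y) = Re (ip x (J y))" by (simp add: ip_J_right)
  then show ?thesis by (simp add: complex_eq_iff Re_ip_polarization[symmetric])
qed

lemma continuous_on_ip [continuous_intros]:
  assumes "continuous_on S f" "continuous_on S g"
  shows "continuous_on S (\<lambda>x. ip (f x) (g x))"
  unfolding ip_polarization
  by (intro continuous_intros assms bounded_linear.continuous_on[OF bounded_linear_J]) auto

lemma antiunitary_add:
  assumes antiunitary: "\<And>x y. ip (C x) (C y) = cnj (ip x y)"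
  shows "C (v + w) = C v + C w"
proof -
  let ?d = "C (v + w) - C v - C w"
  have "ip ?d ?d = cnj (ip (v + w) (v + w) - ip (v + w) v - ip (v + w) w - ip v (v + w) + ip v v
      + ip v w - ip w (v + w) + ip w v + ip w w)"
    by (simp add: ip_diff_left ip_diff_right antiunitary)
  also have "\<dots> = 0" by (simp add: ip_add_left ip_add_right)
  finally show ?thesis by (simp add: ip_self_eq_0_iff algebra_simps)
qed

lemma antiunitary_cscale:
  assumes antiunitary: "\<And>x y. ip (C x) (C y) = cnj (ip x y)"
  shows "C (cscale J z v) = cscale J (cnj z) (C v)"
proof -
  let ?u = "cscale J z v"
  let ?d = "C ?u - cscale J (cnj z) (C v)"
  have "ip ?d ?d = ip (C ?u) (C ?u) - z * ip (C ?u) (C v) - cnj z * ip (C v) (C ?u)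
      + cnj z * z * ip (C v) (C v)"
    by (simp add: ip_diff_left ip_diff_right ip_cscale_left ip_cscale_right algebra_simps)
  also have "\<dots> = cnj (ip ?u ?u) - z * cnj (ip ?u v) - cnj z * cnj (ip v ?u) + cnj z * z * cnj (ip v v)"
    by (simp only: antiunitary)
  also have "\<dots> = 0" by (simp add: ip_cscale_left ip_cscale_right algebra_simps)
  finally show ?thesis by (simp add: ip_self_eq_0_iff)
qed

end

lemma eq_on_closure_UNIV:
  fixes f g :: "'a::topological_space \<Rightarrow> 'b::t2_space"
  assumes "closure D = UNIV" "continuous_on UNIV f" "continuous_on UNIV g" "\<And>x. x \<in> D \<Longrightarrow> f x = g x"
  shows "f x = g x"
proof -
  have "closure D \<subseteq> {x. f x = g x}"
    using assms(2-4) by (intro closure_minimal) (auto intro: closed_Collect_eq)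
  then show ?thesis using assms(1) by auto
qed

context complex_hilbert_space
begin

lemma antiunitary_involution_extension:
  fixes D :: "'h set" and c :: "'h \<Rightarrow> 'h"
  assumes dense: "closure D = UNIV" and c_in: "\<And>a. a \<in> D \<Longrightarrow> c a \<in> D"
    and c_c: "\<And>a. a \<in> D \<Longrightarrow> c (c a) = a"
    and ip_c: "\<And>a b. a \<in> D \<Longrightarrow> b \<in> D \<Longrightarrow> ip (c a) (c b) = cnj (ip a b)"
  shows "\<exists>C. (\<forall>a\<in>D. C a = c a) \<and> continuous_on UNIV C \<and> (\<forall>v w. C (v + w) = C v + C w) \<and>
     (\<forall>z v. C (cscale J z v) = cscale J (cnj z) (C v)) \<and> (\<forall>v. C (C v) = v) \<and>
     (\<forall>v w. ip (C v) (C w) = cnj (ip v w)) \<and> (\<forall>v. norm (C v) = norm v)"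
proof -
  have "dist (c a) (c b) = dist a b" if "a \<in> D" "b \<in> D" for a b
  proof -
    have "ip (c a - c b) (c a - c b) = cnj (ip (a - b) (a - b))"
      using that by (simp add: ip_diff_left ip_diff_right ip_c)
    also have "\<dots> = ip (a - b) (a - b)" by (simp add: ip_self)
    finally have "norm (c a - c b) = norm (a - b)" by (rule norm_eq_if_ip_self_eq)
    then show ?thesis by (simp add: dist_norm)
  qed
  then have "uniformly_continuous_on D c"
    unfolding uniformly_continuous_on_def by (metis)
  then obtain C where "uniformly_continuous_on (closure D) C" and C_c: "\<And>x. x \<in> D \<Longrightarrow> c x = C x"
    using uniformly_continuous_on_extension_on_closure by metis
  then have cont: "continuous_on UNIV C"
    using dense uniformly_continuous_imp_continuous by metis
  have ip_C_D: "ip (C v) (C w) = cnj (ip v w)" if "w \<in> D" for v w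
    by (rule eq_on_closure_UNIV[OF dense, of "\<lambda>v. ip (C v) (C w)" "\<lambda>v. cnj (ip v w)"])
       ((intro continuous_intros cont)+, use that ip_c C_c in auto)
  have ip_C: "ip (C v) (C w) = cnj (ip v w)" for v w
    by (rule eq_on_closure_UNIV[OF dense, of "\<lambda>w. ip (C v) (C w)" "\<lambda>w. cnj (ip v w)"])
       ((intro continuous_intros cont)+, use ip_C_D in auto)
  have "C (C v) = v" for v
    by (rule eq_on_closure_UNIV[OF dense, of "\<lambda>v. C (C v)" "\<lambda>v. v"])
       ((intro continuous_intros continuous_on_compose2[OF cont cont])+, use c_in c_c C_c in auto)
  moreover have "norm (C v) = norm v" for v
    using ip_C[of v v] by (intro norm_eq_if_ip_self_eq) (simp add: ip_self)
  ultimately show ?thesis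
    using C_c cont ip_C antiunitary_add[OF ip_C] antiunitary_cscale[OF ip_C] by (intro exI[of _ C]) auto
qed

end

section \<open>Complex conjugation on a unital commutative product\<close>

locale conjugate_product = complex_hilbert_space J ip
  for J :: "'h::{real_normed_vector,complete_space} \<Rightarrow> 'h" and ip +
  fixes Hfin :: "'h set" and mul :: "'h \<Rightarrow> 'h \<Rightarrow> 'h" and one :: 'h
  assumes subspace_Hfin: "subspace Hfin"
    and one_in_Hfin: "one \<in> Hfin"
    and mul_one_left: "\<And>a. a \<in> Hfin \<Longrightarrow> mul one a = a"
    and mul_commute: "\<And>a b. a \<in> Hfin \<Longrightarrow> b \<in> Hfin \<Longrightarrow> mul a b = mul b a"
    and conj_exists: "\<And>a. a \<in> Hfin \<Longrightarrow> \<exists>b. is_conj_of ip Hfin mul a b"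
begin

abbreviation conjugate :: "'h \<Rightarrow> 'h" where "conjugate \<equiv> conj_of ip Hfin mul"

lemma mul_one_right: "a \<in> Hfin \<Longrightarrow> mul a one = a"
  using mul_commute one_in_Hfin mul_one_left by metis

lemma is_conj_of_unique:
  assumes "is_conj_of ip Hfin mul a b" "is_conj_of ip Hfin mul a b'"
  shows "b = b'"
proof -
  have in_Hfin: "b \<in> Hfin" "b' \<in> Hfin" using assms by (auto simp: is_conj_of_def)
  have "ip x b = ip x (mul b one)" "ip x b' = ip x (mul b' one)" if "x \<in> Hfin" for x
    using in_Hfin by (simp_all add: mul_one_right)
  then have "ip x b = ip x b'" if "x \<in> Hfin" for x
    using assms that one_in_Hfin by (auto simp: is_conj_of_def)
  then have "ip (b - b') b - ip (b - b') b' = 0"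
    using in_Hfin subspace_Hfin by (simp add: subspace_diff)
  then have "ip (b - b') (b - b') = 0" by (simp add: ip_diff_right)
  then show ?thesis by (simp add: ip_self_eq_0_iff)
qed

lemma is_conj_of_conjugate: "a \<in> Hfin \<Longrightarrow> is_conj_of ip Hfin mul a (conjugate a)"
  unfolding conj_of_def by (rule theI') (use conj_exists is_conj_of_unique in blast)

lemma conjugate_in_Hfin: "a \<in> Hfin \<Longrightarrow> conjugate a \<in> Hfin"
  using is_conj_of_conjugate by (simp add: is_conj_of_def)

lemma ip_mul_conjugate:
  "a \<in> Hfin \<Longrightarrow> x \<in> Hfin \<Longrightarrow> y \<in> Hfin \<Longrightarrow> ip (mul a x) y = ip x (mul (conjugate a) y)"
  using is_conj_of_conjugate by (simp add: is_conj_of_def)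

lemma conjugate_conjugate:
  assumes "a \<in> Hfin"
  shows "conjugate (conjugate a) = a"
proof -
  have "ip (mul (conjugate a) x) y = ip x (mul a y)" if "x \<in> Hfin" "y \<in> Hfin" for x y
    using ip_mul_conjugate[OF assms that(2,1)] ip_commute[of x "mul a y"] ip_commute[of y] by simp
  then have "is_conj_of ip Hfin mul (conjugate a) a"
    using assms unfolding is_conj_of_def by blast
  then show ?thesis using is_conj_of_conjugate is_conj_of_unique conjugate_in_Hfin assms by blast
qed

lemma ip_conjugate_conjugate:
  assumes a: "a \<in> Hfin" and b: "b \<in> Hfin"
  shows "ip (conjugate a) (conjugate b) = cnj (ip a b)"
proof -
  have ca: "conjugate a \<in> Hfin" and cb: "conjugate b \<in> Hfin" using a b conjugate_in_Hfin by auto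
  have "ip (conjugate a) (conjugate b) = ip (mul (conjugate a) one) (conjugate b)"
    using mul_one_right ca by simp
  also have "\<dots> = ip one (mul a (conjugate b))"
    using ip_mul_conjugate[OF ca one_in_Hfin cb] conjugate_conjugate[OF a] by simp
  also have "\<dots> = cnj (ip (mul (conjugate b) a) one)"
    using ip_commute[of one "mul a (conjugate b)"] mul_commute[OF a cb] by simp
  also have "\<dots> = cnj (ip a b)"
    using ip_mul_conjugate[OF cb a one_in_Hfin] conjugate_conjugate[OF b] mul_one_right[OF b] by simp
  finally show ?thesis .
qed

end

section \<open>Trigonometric polynomials and the kernel \<open>((1 + cos t) / 2)\<^sup>k\<close>\<close>

inductive trig_poly :: "nat \<Rightarrow> (real \<Rightarrow> real) \<Rightarrow> bool" where
  monomial: "a + b \<le> k \<Longrightarrow> trig_poly k (\<lambda>t. c * (cos t ^ a * sin t ^ b))"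
| add: "trig_poly k f \<Longrightarrow> trig_poly k g \<Longrightarrow> trig_poly k (\<lambda>t. f t + g t)"

lemma trig_poly_cong: "trig_poly k f \<Longrightarrow> k = k' \<Longrightarrow> (\<And>t. f t = g t) \<Longrightarrow> trig_poly k' g"
  by (metis ext)

lemma continuous_on_trig_poly: "trig_poly k g \<Longrightarrow> continuous_on S g"
  by (induction rule: trig_poly.induct) (intro continuous_intros | assumption)+

lemma trig_poly_periodic: "trig_poly k g \<Longrightarrow> g (t + 2 * pi) = g t"
  by (induction rule: trig_poly.induct) auto

lemma trig_poly_const: "trig_poly k (\<lambda>t. c)"
  by (rule trig_poly_cong[OF trig_poly.monomial[of 0 0 k c]]) simp_all

lemma trig_poly_cmult: "trig_poly k g \<Longrightarrow> trig_poly k (\<lambda>t. d * g t)"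
proof (induction rule: trig_poly.induct)
  case (monomial a b k c)
  show ?case by (rule trig_poly_cong[OF trig_poly.monomial[OF monomial, of "d * c"]]) simp_all
next
  case (add k f g)
  show ?case by (rule trig_poly_cong[OF trig_poly.add[OF add.IH]]) (simp_all add: distrib_left)
qed

lemma trig_poly_mono: "trig_poly k g \<Longrightarrow> k \<le> k' \<Longrightarrow> trig_poly k' g"
  by (induction rule: trig_poly.induct) (auto intro: trig_poly.intros)

lemma trig_poly_mult_cos: "trig_poly k g \<Longrightarrow> trig_poly (Suc k) (\<lambda>t. cos t * g t)"
proof (induction rule: trig_poly.induct)
  case (monomial a b k c)
  then have "Suc a + b \<le> Suc k" by simp
  show ?case by (rule trig_poly_cong[OF trig_poly.monomial[OF \<open>Suc a + b \<le> Suc k\<close>, of c]]) simp_all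
next
  case (add k f g)
  show ?case by (rule trig_poly_cong[OF trig_poly.add[OF add.IH]]) (simp_all add: distrib_left)
qed

lemma trig_poly_mult_sin: "trig_poly k g \<Longrightarrow> trig_poly (Suc k) (\<lambda>t. sin t * g t)"
proof (induction rule: trig_poly.induct)
  case (monomial a b k c)
  then have "a + Suc b \<le> Suc k" by simp
  show ?case by (rule trig_poly_cong[OF trig_poly.monomial[OF \<open>a + Suc b \<le> Suc k\<close>, of c]]) simp_all
next
  case (add k f g)
  show ?case by (rule trig_poly_cong[OF trig_poly.add[OF add.IH]]) (simp_all add: distrib_left)
qed

lemma trig_poly_mult_cos_shift: "trig_poly k g \<Longrightarrow> trig_poly (Suc k) (\<lambda>t. cos (t - p) * g t)"
  by (rule trig_poly_cong[OF trig_poly.add[OF trig_poly_cmult[OF trig_poly_mult_cos, of k g "cos p"]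
        trig_poly_cmult[OF trig_poly_mult_sin, of k g "sin p"]]])
     (simp_all add: cos_diff algebra_simps)

lemma trig_poly_mult_sin_shift: "trig_poly k g \<Longrightarrow> trig_poly (Suc k) (\<lambda>t. sin (t - p) * g t)"
  by (rule trig_poly_cong[OF trig_poly.add[OF trig_poly_cmult[OF trig_poly_mult_sin, of k g "cos p"]
        trig_poly_cmult[OF trig_poly_mult_cos, of k g "- sin p"]]])
     (simp_all add: sin_diff algebra_simps)

lemma trig_poly_monomial_shift: "trig_poly (a + b) (\<lambda>t. cos (t - p) ^ a * sin (t - p) ^ b)"
proof (induction a)
  case 0
  show ?case
  proof (induction b)
    case 0
    show ?case using trig_poly_const[of 0 1] by simp
  next
    case (Suc b)
    show ?case by (rule trig_poly_cong[OF trig_poly_mult_sin_shift[OF Suc, where p = p]]) simp_all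
  qed
next
  case (Suc a)
  show ?case by (rule trig_poly_cong[OF trig_poly_mult_cos_shift[OF Suc, where p = p]]) simp_all
qed

lemma trig_poly_shift: "trig_poly k g \<Longrightarrow> trig_poly k (\<lambda>t. g (t - p))"
proof (induction rule: trig_poly.induct)
  case (monomial a b k c)
  show ?case
    by (rule trig_poly_mono[OF trig_poly_cmult[OF trig_poly_monomial_shift[of a b p], of c] monomial])
next
  case (add k f g)
  then show ?case by (intro trig_poly.add)
qed

definition cos_power_kernel :: "nat \<Rightarrow> real \<Rightarrow> real" where
  "cos_power_kernel k t = ((1 + cos t) / 2) ^ k"

lemma trig_poly_cos_power_kernel: "trig_poly k (cos_power_kernel k)"
proof (induction k)
  case 0
  show ?case using trig_poly_const[of 0 1] by (simp add: cos_power_kernel_def)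
next
  case (Suc k)
  show ?case
    by (rule trig_poly_cong[OF trig_poly.add[OF trig_poly_cmult[OF trig_poly_mono[OF Suc], where d = "1/2"]
          trig_poly_cmult[OF trig_poly_mult_cos[OF Suc], where d = "1/2"]]])
       (simp_all add: cos_power_kernel_def field_simps)
qed

lemma cos_power_kernel_nonneg: "0 \<le> cos_power_kernel k t"
proof -
  have "0 \<le> 1 + cos t" using cos_ge_minus_one[of t] by linarith
  then show ?thesis by (simp add: cos_power_kernel_def)
qed

lemma continuous_on_cos_power_kernel: "continuous_on S (cos_power_kernel k)"
  by (rule continuous_on_trig_poly[OF trig_poly_cos_power_kernel])

lemma cos_power_kernel_integrable: "cos_power_kernel k integrable_on {a..b}"
  by (intro integrable_continuous_real continuous_on_cos_power_kernel)

lemma cos_power_kernel_mono: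
  assumes "\<bar>s\<bar> \<le> \<bar>t\<bar>" "\<bar>t\<bar> \<le> pi"
  shows "cos_power_kernel k t \<le> cos_power_kernel k s"
proof -
  have "cos \<bar>t\<bar> \<le> cos \<bar>s\<bar>" using assms by (intro cos_monotone_0_pi_le) auto
  then have "(1 + cos t) / 2 \<le> (1 + cos s) / 2" by simp
  moreover have "0 \<le> 1 + cos t" using cos_ge_minus_one[of t] by linarith
  ultimately show ?thesis unfolding cos_power_kernel_def by (intro power_mono) auto
qed

lemma integral_cos_power_kernel_ge:
  assumes "0 \<le> \<eta>" "\<eta> \<le> pi"
  shows "2 * \<eta> * cos_power_kernel k \<eta> \<le> integral {-pi..pi} (cos_power_kernel k)"
proof -
  have "2 * \<eta> * cos_power_kernel k \<eta> = integral {-\<eta>..\<eta>} (\<lambda>t. cos_power_kernel k \<eta>)"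
    using assms by simp
  also have "\<dots> \<le> integral {-\<eta>..\<eta>} (cos_power_kernel k)"
    using assms by (intro integral_le cos_power_kernel_integrable cos_power_kernel_mono) auto
  also have "\<dots> \<le> integral {-pi..pi} (cos_power_kernel k)"
    using assms by (intro integral_subset_le cos_power_kernel_integrable) (auto simp: cos_power_kernel_nonneg)
  finally show ?thesis .
qed

lemma cos_power_kernel_ratio_small:
  assumes "0 < \<eta>" "\<eta> < d" "d \<le> pi" "\<epsilon> > 0"
  obtains k where "cos_power_kernel k d < \<epsilon> * cos_power_kernel k \<eta>"
proof -
  define q where "q = (1 + cos d) / 2"
  define q' where "q' = (1 + cos \<eta>) / 2"
  have "0 \<le> 1 + cos d" using cos_ge_minus_one[of d] by linarith
  then have q: "0 \<le> q" "q < q'"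
    unfolding q_def q'_def using cos_monotone_0_pi[of \<eta> d] assms by auto
  then have "q / q' < 1" by (simp add: divide_simps)
  then obtain k where "(q / q') ^ k < \<epsilon>" using real_arch_pow_inv assms(4) by blast
  then have "(q / q') ^ k * q' ^ k < \<epsilon> * q' ^ k"
    using q by (intro mult_strict_right_mono) auto
  moreover have "(q / q') ^ k * q' ^ k = q ^ k"
    using q by (simp add: power_divide)
  ultimately show ?thesis
    using that[of k] by (simp add: cos_power_kernel_def q_def q'_def)
qed

lemma cos_power_kernel_concentrates:
  fixes f :: "real \<Rightarrow> real"
  assumes cont: "continuous_on {-pi..pi} f" and f0: "f 0 = 0"
    and bounds: "\<And>t. 0 \<le> f t" "\<And>t. f t \<le> B" and e: "e > 0"
  shows "\<exists>k. integral {-pi..pi} (\<lambda>t. cos_power_kernel k t * f t)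
             < e * integral {-pi..pi} (cos_power_kernel k)"
proof -
  have "0 \<in> {-pi..pi}" by simp
  then obtain \<delta> where \<delta>: "\<delta> > 0" "\<And>t. t \<in> {-pi..pi} \<Longrightarrow> dist t 0 < \<delta> \<Longrightarrow> dist (f t) (f 0) < e / 2"
    using cont e unfolding continuous_on_iff by (metis half_gt_zero)
  define d where "d = min \<delta> pi"
  define \<eta> where "\<eta> = d / 2"
  have d: "0 < d" "d \<le> pi" "d \<le> \<delta>" unfolding d_def using \<delta>(1) by auto
  have \<eta>: "0 < \<eta>" "\<eta> < d" unfolding \<eta>_def using d by auto
  have B: "0 \<le> B" using bounds[of 0] by simp
  define M where "M = e * \<eta> / (2 * pi * (B + 1))"
  have "2 * pi * (B + 1) > 0"
    using B by (intro mult_pos_pos) auto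
  then have M: "M > 0" "2 * pi * (B + 1) * M = e * \<eta>"
    unfolding M_def using e \<eta> B by auto
  then obtain k where k: "cos_power_kernel k d < M * cos_power_kernel k \<eta>"
    using cos_power_kernel_ratio_small \<eta> d by blast
  let ?P = "cos_power_kernel k"
  have "?P t * f t \<le> e / 2 * ?P t + B * ?P d" if t: "t \<in> {-pi..pi}" for t
  proof (cases "\<bar>t\<bar> < d")
    case True
    then have "f t \<le> e / 2"
      using \<delta>(2)[OF t] d f0 by (simp add: dist_real_def)
    then have "?P t * f t \<le> ?P t * (e / 2)"
      using cos_power_kernel_nonneg[of k t] by (intro mult_left_mono)
    then show ?thesis using B cos_power_kernel_nonneg[of k d] by (simp add: mult.commute add_increasing2)
  next
    case False
    then have "?P t \<le> ?P d"
      using cos_power_kernel_mono[of d t k] t d by (simp add: abs_le_iff)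
    then have "?P t * f t \<le> ?P d * B"
      using bounds[of t] cos_power_kernel_nonneg[of k t] by (intro mult_mono) auto
    then show ?thesis using e cos_power_kernel_nonneg[of k t] by (simp add: mult.commute add_increasing)
  qed
  then have "integral {-pi..pi} (\<lambda>t. ?P t * f t) \<le> integral {-pi..pi} (\<lambda>t. e / 2 * ?P t + B * ?P d)"
    by (intro integral_le integrable_continuous_real continuous_intros continuous_on_cos_power_kernel cont)
      auto
  also have "\<dots> = integral {-pi..pi} (\<lambda>t. e / 2 * ?P t) + integral {-pi..pi} (\<lambda>t. B * ?P d)"
    by (intro integral_add integrable_continuous_real continuous_intros continuous_on_cos_power_kernel)
  also have "\<dots> = e / 2 * integral {-pi..pi} ?P + 2 * pi * B * ?P d"
    by simp
  also have "2 * pi * B * ?P d < e / 2 * integral {-pi..pi} ?P"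
  proof -
    have "2 * pi * B * ?P d \<le> 2 * pi * (B + 1) * ?P d"
      using cos_power_kernel_nonneg[of k d] by (intro mult_right_mono) auto
    also have "\<dots> < 2 * pi * (B + 1) * (M * ?P \<eta>)"
      using k B by (intro mult_strict_left_mono) auto
    also have "\<dots> = (2 * pi * (B + 1) * M) * ?P \<eta>"
      by (simp only: mult.assoc)
    also have "\<dots> = e / 2 * (2 * \<eta> * ?P \<eta>)"
      unfolding M(2) by simp
    also have "\<dots> \<le> e / 2 * integral {-pi..pi} ?P"
      using integral_cos_power_kernel_ge[of \<eta> k] \<eta> d e by simp
    finally show ?thesis .
  qed
  finally show ?thesis by auto
qed

section \<open>Integrals with values in a complete normed space\<close>

text \<open>A type variable of sort \<open>{real_normed_vector, complete_space}\<close> does not have sort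
  \<open>banach\<close>, which the existence theorems for integrals require. An isomorphic copy of the
  type is an instance of \<open>banach\<close>, and integrals are transported through it.\<close>

typedef 'a banach_copy = "UNIV :: 'a set"
  morphisms of_copy to_copy by simp

setup_lifting type_definition_banach_copy

instantiation banach_copy :: (real_normed_vector) real_normed_vector
begin

lift_definition zero_banach_copy :: "'a banach_copy" is 0 .
lift_definition plus_banach_copy :: "'a banach_copy \<Rightarrow> 'a banach_copy \<Rightarrow> 'a banach_copy" is "(+)" .
lift_definition minus_banach_copy :: "'a banach_copy \<Rightarrow> 'a banach_copy \<Rightarrow> 'a banach_copy" is "(-)" .
lift_definition uminus_banach_copy :: "'a banach_copy \<Rightarrow> 'a banach_copy" is uminus .
lift_definition scaleR_banach_copy :: "real \<Rightarrow> 'a banach_copy \<Rightarrow> 'a banach_copy" is scaleR .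
lift_definition norm_banach_copy :: "'a banach_copy \<Rightarrow> real" is norm .
lift_definition sgn_banach_copy :: "'a banach_copy \<Rightarrow> 'a banach_copy" is sgn .
lift_definition dist_banach_copy :: "'a banach_copy \<Rightarrow> 'a banach_copy \<Rightarrow> real" is dist .

definition uniformity_banach_copy :: "('a banach_copy \<times> 'a banach_copy) filter" where
  "uniformity_banach_copy = (INF e\<in>{0<..}. principal {(x, y). dist x y < e})"

definition open_banach_copy :: "'a banach_copy set \<Rightarrow> bool" where
  "open_banach_copy U \<longleftrightarrow> (\<forall>x\<in>U. \<forall>\<^sub>F (x', y) in uniformity. x' = x \<longrightarrow> y \<in> U)"

instance
  by standard
    (transfer; simp add: algebra_simps dist_norm norm_triangle_ineq sgn_div_norm
      uniformity_banach_copy_def open_banach_copy_def)+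

end

lemma norm_to_copy [simp]: "norm (to_copy x) = norm x"
  by transfer simp

lemma bounded_linear_to_copy: "bounded_linear to_copy"
  by (rule bounded_linear_intro[where K = 1]) (transfer; simp)+

lemma bounded_linear_of_copy: "bounded_linear of_copy"
  by (rule bounded_linear_intro[where K = 1]) (transfer; simp)+

instance banach_copy :: ("{real_normed_vector,complete_space}") banach
proof
  fix X :: "nat \<Rightarrow> 'a banach_copy"
  assume "Cauchy X"
  then have "Cauchy (\<lambda>n. of_copy (X n))"
    unfolding Cauchy_def by transfer
  then obtain L where "(\<lambda>n. of_copy (X n)) \<longlonglongrightarrow> L"
    using Cauchy_convergent convergent_def by blast
  then have "(\<lambda>n. to_copy (of_copy (X n))) \<longlonglongrightarrow> to_copy L"
    using bounded_linear.tendsto[OF bounded_linear_to_copy] by blast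
  then show "convergent X" unfolding convergent_def by (auto simp: of_copy_inverse)
qed

lemma has_integral_to_copy_iff:
  "((\<lambda>x. to_copy (f x)) has_integral to_copy I) S \<longleftrightarrow> (f has_integral I) S"
  using has_integral_linear[OF _ bounded_linear_to_copy, of f I S]
    has_integral_linear[OF _ bounded_linear_of_copy, of "\<lambda>x. to_copy (f x)" "to_copy I" S]
  by (auto simp: o_def to_copy_inverse)

lemma integrable_on_to_copy_iff: "(\<lambda>x. to_copy (f x)) integrable_on S \<longleftrightarrow> f integrable_on S"
  unfolding integrable_on_def using has_integral_to_copy_iff
  by (metis of_copy_inverse)

lemma integral_to_copy: "integral S (\<lambda>x. to_copy (f x)) = to_copy (integral S f)"
proof (cases "f integrable_on S")
  case True
  then show ?thesis using has_integral_to_copy_iff by blast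
next
  case False
  then show ?thesis
    using integrable_on_to_copy_iff by (metis not_integrable_integral zero_banach_copy.abs_eq)
qed

lemma integrable_continuous_real_complete:
  fixes f :: "real \<Rightarrow> 'a::{real_normed_vector,complete_space}"
  assumes "continuous_on {a..b} f"
  shows "f integrable_on {a..b}"
  using integrable_continuous_real[of a b "\<lambda>x. to_copy (f x)"]
    bounded_linear.continuous_on[OF bounded_linear_to_copy assms]
  by (simp add: integrable_on_to_copy_iff)

lemma integral_combine_complete:
  fixes f :: "real \<Rightarrow> 'a::{real_normed_vector,complete_space}"
  assumes "a \<le> c" "c \<le> b" "f integrable_on {a..b}"
  shows "integral {a..c} f + integral {c..b} f = integral {a..b} f"
proof -
  have "to_copy (integral {a..c} f) + to_copy (integral {c..b} f) = to_copy (integral {a..b} f)"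
    using Henstock_Kurzweil_Integration.integral_combine[OF assms(1,2), of "\<lambda>x. to_copy (f x)"] assms(3)
    by (simp add: integrable_on_to_copy_iff integral_to_copy)
  then show ?thesis by transfer
qed

lemma integral_norm_bound_integral_complete:
  fixes f :: "real \<Rightarrow> 'a::{real_normed_vector,complete_space}"
  assumes "f integrable_on S" "g integrable_on S" "\<And>x. x \<in> S \<Longrightarrow> norm (f x) \<le> g x"
  shows "norm (integral S f) \<le> integral S g"
  using integral_norm_bound_integral[where f = "\<lambda>x. to_copy (f x)"] assms
  by (simp add: integrable_on_to_copy_iff integral_to_copy)

lemma integral_periodic_shift:
  fixes h :: "real \<Rightarrow> 'a::{real_normed_vector,complete_space}"
  assumes cont: "continuous_on UNIV h" and periodic: "\<And>x. h (x + T) = h x" and p: "0 \<le> p" "p \<le> T"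
  shows "integral {a..a + T} (\<lambda>x. h (x + p)) = integral {a..a + T} h"
proof -
  have int: "h integrable_on {c..d}" for c d
    using cont by (intro integrable_continuous_real_complete) (auto intro: continuous_on_subset)
  have "integral {a..a + T} (\<lambda>x. h (x + p)) = integral {a + p..a + T + p} h"
    using integral_shift_Icc_real[of a "a + T" h p] by (simp add: o_def add.commute)
  also have "\<dots> = integral {a + p..a + T} h + integral {a + T..a + T + p} h"
    using p int by (intro integral_combine_complete[symmetric]) auto
  also have "integral {a + T..a + T + p} h = integral {a..a + p} h"
    using integral_shift_Icc_real[of a "a + p" h T] periodic by (simp add: o_def add_ac)
  also have "integral {a + p..a + T} h + integral {a..a + p} h = integral {a..a + T} h"
    using p int integral_combine_complete[of a "a + p" "a + T" h] by (simp add: add.commute)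
  finally show ?thesis .
qed

lemma has_integral_in_closed_subspace:
  fixes f :: "real \<Rightarrow> 'a::real_normed_vector"
  assumes V: "subspace V" "closed V" and f: "(f has_integral I) {a..b}" and f_in: "\<And>x. x \<in> {a..b} \<Longrightarrow> f x \<in> V"
  shows "I \<in> V"
proof -
  have "((\<lambda>p. \<Sum>(x, k)\<in>p. measure lborel k *\<^sub>R f x) \<longlongrightarrow> I) (division_filter (cbox a b))"
    using f unfolding has_integral_cbox[symmetric] by simp
  moreover have "\<forall>\<^sub>F p in division_filter (cbox a b). (\<Sum>(x, k)\<in>p. measure lborel k *\<^sub>R f x) \<in> V"
    using eventually_division_filter_tagged_division
  proof (rule eventually_mono)
    fix p assume p: "p tagged_division_of cbox a b"
    show "(\<Sum>(x, k)\<in>p. measure lborel k *\<^sub>R f x) \<in> V"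
      unfolding case_prod_unfold
    proof (rule subspace_sum[OF V(1)])
      fix y assume "y \<in> p"
      then have "f (fst y) \<in> V" using tag_in_interval[OF p, of "fst y" "snd y"] f_in by simp
      then show "measure lborel (snd y) *\<^sub>R f (fst y) \<in> V" by (rule subspace_scale[OF V(1)])
    qed
  qed
  ultimately show ?thesis
    using Lim_in_closed_set[OF V(2) _ division_filter_not_empty] by blast
qed

lemma subspace_closure:
  fixes S :: "'a::real_normed_vector set"
  assumes "subspace S"
  shows "subspace (closure S)"
proof -
  have "x + y \<in> closure S" if xy: "x \<in> closure S" "y \<in> closure S" for x y
  proof -
    obtain a b where "\<forall>n. a n \<in> S" "a \<longlonglongrightarrow> x" "\<forall>n. b n \<in> S" "b \<longlonglongrightarrow> y"
      using xy unfolding closure_sequential by blast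
    then show ?thesis
      unfolding closure_sequential using assms
      by (intro exI[of _ "\<lambda>n. a n + b n"]) (auto intro: tendsto_add subspace_add)
  qed
  moreover have "c *\<^sub>R x \<in> closure S" if x: "x \<in> closure S" for c x
  proof -
    obtain a where "\<forall>n. a n \<in> S" "a \<longlonglongrightarrow> x"
      using x unfolding closure_sequential by blast
    then show ?thesis
      unfolding closure_sequential using assms
      by (intro exI[of _ "\<lambda>n. c *\<^sub>R a n"]) (auto intro: tendsto_scaleR subspace_scale)
  qed
  moreover have "0 \<in> closure S"
    using assms closure_subset subspace_0 by blast
  ultimately show ?thesis
    by (simp add: subspace_def)
qed

lemma mat2_nth [simp]:
  "mat2 a b c d $ 1 $ 1 = a" "mat2 a b c d $ 1 $ 2 = b" "mat2 a b c d $ 2 $ 1 = c" "mat2 a b c d $ 2 $ 2 = d"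
  unfolding mat2_def by simp_all

lemma rot_add: "rot a ** rot b = rot (a + b)"
  by (simp add: vec_eq_iff forall_2 matrix_matrix_mult_def sum_2 rot_def cos_add sin_add algebra_simps)

lemma rot_in_SL2: "rot t \<in> SL2"
  by (simp add: SL2_def det_2 rot_def power2_eq_square[symmetric])

lemma rot_0: "rot 0 = mat 1"
  by (simp add: vec_eq_iff forall_2 rot_def mat_def)

lemma rot_periodic: "rot (t + 2 * pi) = rot t"
  by (simp add: rot_def)

lemma rot_eq_rot_in_period: obtains t0 where "0 \<le> t0" "t0 \<le> 2 * pi" "rot t = rot t0"
proof
  define n where "n = floor (t / (2 * pi))"
  have "of_int n \<le> t / (2 * pi)" "t / (2 * pi) < of_int n + 1" unfolding n_def by linarith+
  then show "0 \<le> t - 2 * pi * of_int n" "t - 2 * pi * of_int n \<le> 2 * pi"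
    by (simp_all add: field_simps)
  show "rot t = rot (t - 2 * pi * of_int n)"
    by (simp add: rot_def cos_diff sin_diff)
qed

lemma continuous_on_rot: "continuous_on S rot"
proof -
  have rot_eq: "rot = (\<lambda>t. cos t *\<^sub>R mat2 1 0 0 1 + sin t *\<^sub>R mat2 0 (-1) 1 0)"
    by (simp add: fun_eq_iff vec_eq_iff forall_2 rot_def)
  show ?thesis unfolding rot_eq by (intro continuous_intros)
qed

section \<open>Averaging over \<open>K\<close>\<close>

locale unitary_representation = complex_hilbert_space J ip
  for J :: "'h::{real_normed_vector,complete_space} \<Rightarrow> 'h" and ip +
  fixes \<pi> :: "real^2^2 \<Rightarrow> 'h \<Rightarrow> 'h"
  assumes unitary_rep: "unitary_rep J ip \<pi>"
begin

lemma norm_\<pi>: "g \<in> SL2 \<Longrightarrow> norm (\<pi> g v) = norm v"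
  using unitary_rep by (intro norm_eq_if_ip_self_eq) (simp add: unitary_rep_def)

lemma bounded_linear_\<pi>: "g \<in> SL2 \<Longrightarrow> bounded_linear (\<pi> g)"
  using unitary_rep norm_\<pi>
  by (intro bounded_linear_intro[where K = 1]) (auto simp: unitary_rep_def clinear_map_def linear_add linear_scale)

lemma \<pi>_rot_add: "\<pi> (rot a) (\<pi> (rot b) v) = \<pi> (rot (a + b)) v"
  using unitary_rep rot_in_SL2 by (simp add: unitary_rep_def rot_add[symmetric])

lemma \<pi>_rot_0: "\<pi> (rot 0) v = v"
  using unitary_rep by (simp add: unitary_rep_def rot_0)

lemma continuous_on_\<pi>_rot: "continuous_on S (\<lambda>t. \<pi> (rot t) v)"
  using unitary_rep continuous_on_compose2[OF _ continuous_on_rot, of SL2 "\<lambda>g. \<pi> g v" S] rot_in_SL2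
  by (auto simp: unitary_rep_def)

definition K_integral :: "(real \<Rightarrow> real) \<Rightarrow> 'h \<Rightarrow> 'h" where
  "K_integral g v = integral {-pi..pi} (\<lambda>t. g t *\<^sub>R \<pi> (rot t) v)"

lemma K_integral_has_integral:
  assumes "continuous_on {-pi..pi} g"
  shows "((\<lambda>t. g t *\<^sub>R \<pi> (rot t) v) has_integral K_integral g v) {-pi..pi}"
  unfolding K_integral_def
  by (intro integrable_integral integrable_continuous_real_complete continuous_on_scaleR assms continuous_on_\<pi>_rot)

lemma K_integral_add:
  assumes "continuous_on {-pi..pi} f" "continuous_on {-pi..pi} g"
  shows "K_integral (\<lambda>t. f t + g t) v = K_integral f v + K_integral g v"
proof -
  have "((\<lambda>t. (f t + g t) *\<^sub>R \<pi> (rot t) v) has_integral K_integral f v + K_integral g v) {-pi..pi}"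
    unfolding scaleR_add_left using assms by (intro has_integral_add K_integral_has_integral)
  then show ?thesis by (simp add: K_integral_def integral_unique)
qed

lemma K_integral_cmult: "K_integral (\<lambda>t. c * g t) v = c *\<^sub>R K_integral g v"
  by (simp add: K_integral_def flip: scaleR_scaleR)

lemma K_integral_in_closed_invariant_subspace:
  assumes V: "subspace V" "closed V" "G_invariant \<pi> V" and v: "v \<in> V" and g: "continuous_on {-pi..pi} g"
  shows "K_integral g v \<in> V"
  using V v rot_in_SL2 unfolding G_invariant_def
  by (intro has_integral_in_closed_subspace[OF V(1,2) K_integral_has_integral[OF g]])
    (blast intro: subspace_scale)

lemma \<pi>_rot_K_integral:
  assumes g: "continuous_on UNIV g" "\<And>t. g (t + 2 * pi) = g t" and p: "0 \<le> p" "p \<le> 2 * pi"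
  shows "\<pi> (rot p) (K_integral g v) = K_integral (\<lambda>t. g (t - p)) v"
proof -
  have lin: "bounded_linear (\<pi> (rot p))" by (rule bounded_linear_\<pi>[OF rot_in_SL2])
  have "((\<pi> (rot p) \<circ> (\<lambda>t. g t *\<^sub>R \<pi> (rot t) v)) has_integral \<pi> (rot p) (K_integral g v)) {-pi..pi}"
    by (intro has_integral_linear K_integral_has_integral lin continuous_on_subset[OF g(1)]) auto
  then have "((\<lambda>t. g t *\<^sub>R \<pi> (rot (t + p)) v) has_integral \<pi> (rot p) (K_integral g v)) {-pi..pi}"
    by (simp add: o_def linear_cmul[OF bounded_linear.linear[OF lin]] \<pi>_rot_add add.commute)
  moreover have "integral {-pi..-pi + 2 * pi} (\<lambda>t. g (t + p - p) *\<^sub>R \<pi> (rot (t + p)) v)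
      = integral {-pi..-pi + 2 * pi} (\<lambda>t. g (t - p) *\<^sub>R \<pi> (rot t) v)"
  proof (intro integral_periodic_shift[where h = "\<lambda>t. g (t - p) *\<^sub>R \<pi> (rot t) v"] p)
    show "continuous_on UNIV (\<lambda>t. g (t - p) *\<^sub>R \<pi> (rot t) v)"
      using continuous_on_compose2[OF g(1) continuous_on_diff[OF continuous_on_id continuous_on_const]]
      by (intro continuous_on_scaleR continuous_on_\<pi>_rot) auto
    show "g (t + 2 * pi - p) *\<^sub>R \<pi> (rot (t + 2 * pi)) v = g (t - p) *\<^sub>R \<pi> (rot t) v" for t
      using g(2)[of "t - p"] rot_periodic[of t] by (simp add: algebra_simps)
  qed
  ultimately show ?thesis
    unfolding K_integral_def by (simp add: integral_unique)
qed

lemma K_integral_trig_poly_in_span: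
  "trig_poly k g \<Longrightarrow> K_integral g v \<in> span ((\<lambda>(a, b). K_integral (\<lambda>t. cos t ^ a * sin t ^ b) v) ` ({..k} \<times> {..k}))"
proof (induction rule: trig_poly.induct)
  case (monomial a b k c)
  then have "(a, b) \<in> {..k} \<times> {..k}" by auto
  then show ?case unfolding K_integral_cmult by (intro span_scale span_base) force
next
  case (add k f g)
  then show ?case by (simp add: K_integral_add continuous_on_trig_poly span_add)
qed

lemma K_finite_K_integral:
  assumes g: "trig_poly k g"
  shows "K_finite J \<pi> (K_integral g v)"
  unfolding K_finite_def
proof (intro exI conjI allI)
  let ?B = "(\<lambda>(a, b). K_integral (\<lambda>t. cos t ^ a * sin t ^ b) v) ` ({..k} \<times> {..k})"
  fix t
  obtain t0 where t0: "0 \<le> t0" "t0 \<le> 2 * pi" "rot t = rot t0" by (rule rot_eq_rot_in_period)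
  have "\<pi> (rot t) (K_integral g v) = K_integral (\<lambda>s. g (s - t0)) v"
    unfolding t0(3) by (rule \<pi>_rot_K_integral[where g = g and p = t0, OF continuous_on_trig_poly[OF g] trig_poly_periodic[OF g] t0(1,2)])
  also have "\<dots> \<in> span ?B" by (rule K_integral_trig_poly_in_span[OF trig_poly_shift[OF g]])
  finally show "\<pi> (rot t) (K_integral g v) \<in> span (?B \<union> J ` ?B)"
    using span_mono[of ?B] by blast
qed simp

lemma K_integral_cos_power_kernel_approx:
  assumes "e > 0"
  shows "\<exists>k c. dist (c *\<^sub>R K_integral (cos_power_kernel k) v) v < e"
proof -
  define f where "f t = norm (\<pi> (rot t) v - v)" for t
  have "f t \<le> 2 * norm v" for t
    using norm_triangle_ineq4[of "\<pi> (rot t) v" v] norm_\<pi>[OF rot_in_SL2] by (simp add: f_def)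
  moreover have f_cont: "continuous_on {-pi..pi} f"
    unfolding f_def by (intro continuous_on_norm continuous_on_diff continuous_on_\<pi>_rot continuous_on_const)
  ultimately obtain k where k: "integral {-pi..pi} (\<lambda>t. cos_power_kernel k t * f t)
      < e * integral {-pi..pi} (cos_power_kernel k)"
    using cos_power_kernel_concentrates[of f "2 * norm v" e] assms by (auto simp: f_def \<pi>_rot_0)
  let ?P = "cos_power_kernel k"
  define I where "I = integral {-pi..pi} ?P"
  have Pf_integrable: "(\<lambda>t. ?P t * f t) integrable_on {-pi..pi}"
    by (intro integrable_continuous_real continuous_intros continuous_on_cos_power_kernel f_cont)
  then have "0 \<le> integral {-pi..pi} (\<lambda>t. ?P t * f t)"
    by (rule integral_nonneg) (simp add: f_def cos_power_kernel_nonneg)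
  then have I: "I > 0" using k assms unfolding I_def by (meson le_less_trans zero_less_mult_pos)
  have "((\<lambda>t. ?P t *\<^sub>R (\<pi> (rot t) v - v)) has_integral K_integral ?P v - I *\<^sub>R v) {-pi..pi}"
    unfolding scaleR_diff_right I_def
    by (intro has_integral_diff K_integral_has_integral continuous_on_cos_power_kernel
        has_integral_scaleR_left integrable_integral cos_power_kernel_integrable)
  then have integrable: "(\<lambda>t. ?P t *\<^sub>R (\<pi> (rot t) v - v)) integrable_on {-pi..pi}"
    and integral: "integral {-pi..pi} (\<lambda>t. ?P t *\<^sub>R (\<pi> (rot t) v - v)) = K_integral ?P v - I *\<^sub>R v"
    by (auto simp: integral_unique)
  have "norm (K_integral ?P v - I *\<^sub>R v) \<le> integral {-pi..pi} (\<lambda>t. ?P t * f t)"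
    unfolding integral[symmetric]
    by (intro integral_norm_bound_integral_complete Pf_integrable integrable)
      (simp add: f_def cos_power_kernel_nonneg)
  also have "\<dots> < e * I" using k by (simp add: I_def)
  finally have "norm (K_integral ?P v - I *\<^sub>R v) / I < e"
    using I by (simp add: pos_divide_less_eq mult.commute)
  moreover have "(1 / I) *\<^sub>R K_integral ?P v - v = (1 / I) *\<^sub>R (K_integral ?P v - I *\<^sub>R v)"
    using I by (simp add: scaleR_diff_right)
  ultimately have "dist ((1 / I) *\<^sub>R K_integral ?P v) v < e"
    using I by (simp add: dist_norm)
  then show ?thesis by blast
qed

lemma invariant_subspace_subset_closure_K_finite:
  assumes V: "subspace V" "closed V" "G_invariant \<pi> V"
  shows "V \<subseteq> closure {w \<in> V. K_finite J \<pi> w}"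
proof
  fix v assume v: "v \<in> V"
  show "v \<in> closure {w \<in> V. K_finite J \<pi> w}"
    unfolding closure_approachable
  proof (intro allI impI)
    fix e :: real assume "e > 0"
    then obtain k c where kc: "dist (c *\<^sub>R K_integral (cos_power_kernel k) v) v < e"
      using K_integral_cos_power_kernel_approx by blast
    have "c *\<^sub>R K_integral (cos_power_kernel k) v = K_integral (\<lambda>t. c * cos_power_kernel k t) v"
      by (simp add: K_integral_cmult)
    moreover have "trig_poly k (\<lambda>t. c * cos_power_kernel k t)"
      by (intro trig_poly_cmult trig_poly_cos_power_kernel)
    ultimately have "c *\<^sub>R K_integral (cos_power_kernel k) v \<in> {w \<in> V. K_finite J \<pi> w}"
      using K_integral_in_closed_invariant_subspace[OF V v] K_finite_K_integral continuous_on_trig_poly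
      by simp
    then show "\<exists>y\<in>{w \<in> V. K_finite J \<pi> w}. dist y v < e" using kc by blast
  qed
qed

lemma dense_Hfin:
  assumes "discrete_spectrum_with_fin J ip \<pi> Hfin"
  shows "closure Hfin = UNIV"
proof -
  obtain I :: "'h set set" where I: "\<forall>V\<in>I. irreducible_sub J \<pi> V" "closure (span (\<Union>I)) = UNIV"
      and Hfin: "Hfin = span (\<Union>V\<in>I. {v \<in> V. K_finite J \<pi> v})"
    using assms unfolding discrete_spectrum_with_fin_def by blast
  have "V \<subseteq> closure Hfin" if "V \<in> I" for V
  proof -
    have "subspace V" "closed V" "G_invariant \<pi> V"
      using I(1) that unfolding irreducible_sub_def csubspace_def by auto
    then have "V \<subseteq> closure {w \<in> V. K_finite J \<pi> w}"
      by (rule invariant_subspace_subset_closure_K_finite)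
    also have "\<dots> \<subseteq> closure Hfin"
      unfolding Hfin using that by (intro closure_mono) (auto intro: span_base)
    finally show ?thesis .
  qed
  then have "span (\<Union>I) \<subseteq> closure Hfin"
    by (intro span_minimal subspace_closure) (auto simp: Hfin)
  then have "closure (span (\<Union>I)) \<subseteq> closure Hfin"
    by (simp add: closure_minimal)
  then show ?thesis using I(2) by auto
qed

end

theorem proposition9p5:
  fixes J :: "'h::{real_normed_vector,complete_space} \<Rightarrow> 'h"
    and ip :: "'h \<Rightarrow> 'h \<Rightarrow> complex"
    and \<pi> :: "real^2^2 \<Rightarrow> 'h \<Rightarrow> 'h"
    and Hfin :: "'h set"
    and mul :: "'h \<Rightarrow> 'h \<Rightarrow> 'h"
    and one :: "'h"
  assumes "multiplicative_rep J ip \<pi> Hfin mul one"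
  shows "\<exists>C :: 'h \<Rightarrow> 'h.
           (\<forall>a\<in>Hfin. C a = conj_of ip Hfin mul a) \<and>
           continuous_on UNIV C \<and>
           (\<forall>v w. C (v + w) = C v + C w) \<and>
           (\<forall>z v. C (cscale J z v) = cscale J (cnj z) (C v)) \<and>
           (\<forall>v. C (C v) = v) \<and>
           (\<forall>v w. ip (C v) (C w) = cnj (ip v w)) \<and>
           (\<forall>v. norm (C v) = norm v)"
proof -
  have hilbert: "complex_hilbert J ip" and rep: "unitary_rep J ip \<pi>"
    and spectrum: "discrete_spectrum_with_fin J ip \<pi> Hfin"
    and unit: "one \<in> Hfin" "\<forall>a\<in>Hfin. mul one a = a"
    and commutative: "\<forall>a\<in>Hfin. \<forall>b\<in>Hfin. mul a b = mul b a"
    and conjugates: "\<forall>a\<in>Hfin. \<exists>b. is_conj_of ip Hfin mul a b"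
    using assms unfolding multiplicative_rep_def by - (elim conjE, assumption)+
  have "subspace Hfin"
    using spectrum unfolding discrete_spectrum_with_fin_def by auto
  interpret unitary_representation J ip \<pi>
    using hilbert rep by unfold_locales
  interpret conjugate_product J ip Hfin mul one
    using \<open>subspace Hfin\<close> unit commutative conjugates by unfold_locales auto
  show ?thesis
    by (rule antiunitary_involution_extension[OF dense_Hfin[OF spectrum]])
      (simp_all add: conjugate_in_Hfin conjugate_conjugate ip_conjugate_conjugate)
qed

end
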